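(* Let $H$ be a complex Hilbert space and $\mathcal S(H)$ the set of bounded self-adjoint operators on $H$ with the logical order $\preceq$. For every pair $A,B \in \mathcal S(H)$, the set $\{P_C : C \in \mathcal S(H),\ C \preceq A \text{ and } C \preceq B\}$ has a maximum element (with respect to the usual order of projections), the meet $A \curlywedge B$ of $A$ and $B$ in $(\mathcal S(H),\preceq)$ exists, and \[ A \curlywedge B = B\big(\max\{P_C : C \preceq A \text{ and } C \preceq B\}\big). \]
   Context: For $C \in \mathcal S(H)$, $P_C$ denotes the orthogonal projection onto the closure of the range of $C$; projections are ordered by $P_1 \le P_2$ iff $P_1P_2 = P_1$. The logical order: $A \preceq B$ iff $B = A + D$ for some $D \in \mathcal S(H)$ with $AD = O$; equivalently $A = BP_A$. Juxtaposition denotes operator composition. *)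

theory Defs
  imports "HOL-Analysis.Analysis"
begin

class scaleC =
  fixes scaleC :: "complex \<Rightarrow> 'a \<Rightarrow> 'a" (infixr \<open>*\<^sub>C\<close> 75)

class complex_vector = real_vector + scaleC +
  assumes scaleC_add_right: "a *\<^sub>C (x + y) = a *\<^sub>C x + a *\<^sub>C y"
    and scaleC_add_left: "(a + b) *\<^sub>C x = a *\<^sub>C x + b *\<^sub>C x"
    and scaleC_scaleC: "a *\<^sub>C (b *\<^sub>C x) = (a * b) *\<^sub>C x"
    and scaleC_one: "1 *\<^sub>C x = x"
    and scaleR_scaleC: "scaleR r x = (complex_of_real r) *\<^sub>C x"

class complex_normed_vector = complex_vector + real_normed_vector +
  assumes norm_scaleC: "norm (a *\<^sub>C x) = cmod a * norm x"

class complex_inner = complex_normed_vector +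
  fixes cinner :: "'a \<Rightarrow> 'a \<Rightarrow> complex"
  assumes cinner_commute: "cinner x y = cnj (cinner y x)"
    and cinner_add_left: "cinner (x + y) z = cinner x z + cinner y z"
    and cinner_scaleC_left: "cinner (a *\<^sub>C x) y = cnj a * cinner x y"
    and cinner_self_real: "Im (cinner x x) = 0"
    and cinner_self_nonneg: "0 \<le> Re (cinner x x)"
    and cinner_self_eq_zero: "cinner x x = 0 \<longleftrightarrow> x = 0"
    and norm_eq_sqrt_cinner: "norm x = sqrt (Re (cinner x x))"

class chilbert_space = complex_inner + complete_space

definition bounded_clinear :: "('a::complex_normed_vector \<Rightarrow> 'b::complex_normed_vector) \<Rightarrow> bool" where
  "bounded_clinear f \<longleftrightarrow>
     (\<forall>x y. f (x + y) = f x + f y) \<and> (\<forall>c x. f (c *\<^sub>C x) = c *\<^sub>C f x) \<and>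
     (\<exists>K. \<forall>x. norm (f x) \<le> norm x * K)"

definition selfadj_ops :: "('a::chilbert_space \<Rightarrow> 'a) set" where
  "selfadj_ops = {A. bounded_clinear A \<and> (\<forall>x y. cinner (A x) y = cinner x (A y))}"

definition zero_op :: "'a::chilbert_space \<Rightarrow> 'a" where
  "zero_op = (\<lambda>_. 0)"

definition is_orth_proj :: "('a::chilbert_space \<Rightarrow> 'a) \<Rightarrow> bool" where
  "is_orth_proj P \<longleftrightarrow> P \<in> selfadj_ops \<and> P \<circ> P = P"

definition range_proj :: "('a::chilbert_space \<Rightarrow> 'a) \<Rightarrow> ('a \<Rightarrow> 'a)" where
  "range_proj C = (THE P. is_orth_proj P \<and> range P = closure (range C))"

definition proj_le :: "('a::chilbert_space \<Rightarrow> 'a) \<Rightarrow> ('a \<Rightarrow> 'a) \<Rightarrow> bool" where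
  "proj_le P1 P2 \<longleftrightarrow> P1 \<circ> P2 = P1"

definition logic_le :: "('a::chilbert_space \<Rightarrow> 'a) \<Rightarrow> ('a \<Rightarrow> 'a) \<Rightarrow> bool" where
  "logic_le A B \<longleftrightarrow> (\<exists>D \<in> selfadj_ops. B = (\<lambda>x. A x + D x) \<and> A \<circ> D = zero_op)"

definition is_logic_meet :: "('a::chilbert_space \<Rightarrow> 'a) \<Rightarrow> ('a \<Rightarrow> 'a) \<Rightarrow> ('a \<Rightarrow> 'a) \<Rightarrow> bool" where
  "is_logic_meet A B M \<longleftrightarrow> M \<in> selfadj_ops \<and> logic_le M A \<and> logic_le M B \<and>
     (\<forall>E \<in> selfadj_ops. logic_le E A \<and> logic_le E B \<longrightarrow> logic_le E M)"

end

theory Submission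
  imports Defs
begin

text \<open>Let \<open>K\<close> be the set of vectors \<open>x\<close> with \<open>A (w x) = B (w x)\<close> for every finite
  composition \<open>w\<close> of \<open>A\<close> and \<open>B\<close>: the largest closed subspace that is invariant under
  \<open>A\<close> and \<open>B\<close> and on which they agree. Its projection \<open>P\<close> commutes with \<open>A\<close> and \<open>B\<close>,
  so \<open>A P = B P\<close> is a common lower bound. Conversely a common lower bound \<open>C\<close> satisfies
  \<open>A P\<^sub>C = C = B P\<^sub>C\<close>, hence \<open>P\<^sub>C\<close> commutes with \<open>A\<close> and \<open>B\<close>, its range lies in
  \<open>K\<close>, and \<open>ran C \<subseteq> ran (A P)\<close>. Thus \<open>P\<^sub>C \<le> P\<^sub>A\<^sub>P\<close>, and every lower bound \<open>E\<close>
  factors as \<open>E = (A P) P\<^sub>E\<close> with \<open>P\<^sub>E\<close> commuting with \<open>A P\<close>, i.e. \<open>E \<preceq> A P\<close>.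
  Finally \<open>B P\<^sub>A\<^sub>P = A P\<close>.\<close>

subsection \<open>Complex inner product spaces\<close>

lemma scaleC_diff_right: "a *\<^sub>C (x - y) = a *\<^sub>C x - a *\<^sub>C (y::'a::complex_vector)"
  using scaleC_add_right[of a "x - y" y] by (simp add: eq_diff_eq)

lemma cinner_zero_left [simp]: "cinner 0 (y::'a::complex_inner) = 0"
  using cinner_add_left[of "0::'a" 0 y] by simp

lemma cinner_zero_right [simp]: "cinner (x::'a::complex_inner) 0 = 0"
  by (subst cinner_commute) simp

lemma cinner_minus_left: "cinner (- x) (y::'a::complex_inner) = - cinner x y"
  using cinner_add_left[of "-x" x y] by (simp add: eq_neg_iff_add_eq_0)

lemma cinner_diff_left: "cinner (x - y) (z::'a::complex_inner) = cinner x z - cinner y z"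
  by (simp only: diff_conv_add_uminus cinner_add_left cinner_minus_left)

lemma cinner_add_right: "cinner z (x + y) = cinner z x + cinner (z::'a::complex_inner) y"
  by (subst (1 2 3) cinner_commute) (simp add: cinner_add_left)

lemma cinner_diff_right: "cinner z (x - y) = cinner z x - cinner (z::'a::complex_inner) y"
  by (subst (1 2 3) cinner_commute) (simp add: cinner_diff_left)

lemma cinner_scaleC_right: "cinner x (a *\<^sub>C y) = a * cinner (x::'a::complex_inner) y"
  by (subst (1 2) cinner_commute) (simp add: cinner_scaleC_left)

lemma cinner_extensionality:
  assumes "\<And>y. cinner x y = cinner z (y::'a::complex_inner)"
  shows "x = z"
proof -
  have "cinner (x - z) (x - z) = 0"
    using assms[of "x - z"] by (simp add: cinner_diff_left)
  then show ?thesis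
    by (simp add: cinner_self_eq_zero)
qed

lemma cinner_eq_zero_imp_zero: "(\<And>y. cinner x y = 0) \<Longrightarrow> x = (0::'a::complex_inner)"
  by (rule cinner_extensionality) simp

lemma power2_norm_eq_cinner: "(norm x)\<^sup>2 = Re (cinner x (x::'a::complex_inner))"
  using norm_eq_sqrt_cinner[of x] cinner_self_nonneg[of x] by simp

lemma power2_norm_add:
  "(norm (x + y))\<^sup>2 = (norm x)\<^sup>2 + (norm y)\<^sup>2 + 2 * Re (cinner x (y::'a::complex_inner))"
proof -
  have "Re (cinner y x) = Re (cinner x y)"
    by (subst cinner_commute) simp
  then show ?thesis
    by (simp add: power2_norm_eq_cinner cinner_add_left cinner_add_right)
qed

lemma power2_norm_diff:
  "(norm (x - y))\<^sup>2 = (norm x)\<^sup>2 + (norm y)\<^sup>2 - 2 * Re (cinner x (y::'a::complex_inner))"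
  using power2_norm_add[of x "-y"] cinner_diff_right[of x 0 y] by simp

lemma parallelogram_law:
  "(norm (x + y))\<^sup>2 + (norm (x - y))\<^sup>2 = 2 * (norm x)\<^sup>2 + 2 * (norm (y::'a::complex_inner))\<^sup>2"
  using power2_norm_add[of x y] power2_norm_diff[of x y] by simp

subsection \<open>Bounded complex-linear maps\<close>

lemma bounded_clinear_iff:
  "bounded_clinear f \<longleftrightarrow> bounded_linear f \<and> (\<forall>c x. f (c *\<^sub>C x) = c *\<^sub>C f x)"
proof
  assume f: "bounded_clinear f"
  then obtain K where "\<And>x. norm (f x) \<le> norm x * K"
    unfolding bounded_clinear_def by blast
  with f show "bounded_linear f \<and> (\<forall>c x. f (c *\<^sub>C x) = c *\<^sub>C f x)"
    unfolding bounded_clinear_def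
    by (auto intro!: bounded_linear_intro[where K = K] simp: scaleR_scaleC)
next
  assume "bounded_linear f \<and> (\<forall>c x. f (c *\<^sub>C x) = c *\<^sub>C f x)"
  then show "bounded_clinear f"
    unfolding bounded_clinear_def
    by (auto simp: linear_add bounded_linear.linear bounded_linear.bounded)
qed

lemma bounded_clinear_bounded_linear: "bounded_clinear f \<Longrightarrow> bounded_linear f"
  by (simp add: bounded_clinear_iff)

lemma bounded_clinear_scaleC: "bounded_clinear f \<Longrightarrow> f (c *\<^sub>C x) = c *\<^sub>C f x"
  by (simp add: bounded_clinear_iff)

lemma bounded_clinear_add: "bounded_clinear f \<Longrightarrow> f (x + y) = f x + f y"
  by (simp add: bounded_clinear_def)

lemma bounded_clinear_diff: "bounded_clinear f \<Longrightarrow> f (x - y) = f x - f y"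
  by (simp add: bounded_clinear_bounded_linear bounded_linear.linear linear_diff)

lemma bounded_clinear_zero: "bounded_clinear f \<Longrightarrow> f 0 = 0"
  by (simp add: bounded_clinear_bounded_linear bounded_linear.linear linear_0)

lemma bounded_clinear_continuous_on: "bounded_clinear f \<Longrightarrow> continuous_on S f"
  by (simp add: bounded_clinear_bounded_linear linear_continuous_on)

lemma bounded_clinear_id: "bounded_clinear id"
  by (simp add: bounded_clinear_iff bounded_linear_ident[unfolded id_def[symmetric]])

lemma bounded_clinear_compose:
  "bounded_clinear f \<Longrightarrow> bounded_clinear g \<Longrightarrow> bounded_clinear (f \<circ> g)"
  by (simp add: bounded_clinear_iff bounded_linear_compose o_def)

lemma bounded_clinear_sub:
  "bounded_clinear f \<Longrightarrow> bounded_clinear g \<Longrightarrow> bounded_clinear (\<lambda>x. f x - g x)"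
  by (simp add: bounded_clinear_iff bounded_linear_sub scaleC_diff_right)

subsection \<open>Complex subspaces\<close>

definition csubspace :: "'a::complex_vector set \<Rightarrow> bool" where
  "csubspace S \<longleftrightarrow> 0 \<in> S \<and> (\<forall>x\<in>S. \<forall>y\<in>S. x + y \<in> S) \<and> (\<forall>c. \<forall>x\<in>S. c *\<^sub>C x \<in> S)"

lemma csubspace_0: "csubspace S \<Longrightarrow> 0 \<in> S"
  unfolding csubspace_def by blast

lemma csubspace_add: "csubspace S \<Longrightarrow> x \<in> S \<Longrightarrow> y \<in> S \<Longrightarrow> x + y \<in> S"
  unfolding csubspace_def by blast

lemma csubspace_scaleC: "csubspace S \<Longrightarrow> x \<in> S \<Longrightarrow> c *\<^sub>C x \<in> S"
  unfolding csubspace_def by blast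

lemma csubspace_scaleR: "csubspace S \<Longrightarrow> x \<in> S \<Longrightarrow> r *\<^sub>R x \<in> S"
  unfolding scaleR_scaleC by (rule csubspace_scaleC)

lemma csubspace_diff: "csubspace S \<Longrightarrow> x \<in> S \<Longrightarrow> y \<in> S \<Longrightarrow> x - y \<in> S"
  using csubspace_add[of S x "(-1) *\<^sub>R y"] csubspace_scaleR[of S y "-1"] by simp

lemma csubspace_closure:
  fixes S :: "'a::complex_normed_vector set"
  assumes S: "csubspace S"
  shows "csubspace (closure S)"
proof -
  have "(\<lambda>(x, y). x + c *\<^sub>C y) ` closure (S \<times> S) \<subseteq> closure S" for c
  proof (rule image_closure_subset)
    have "bounded_linear (\<lambda>y::'a. c *\<^sub>C y)"
      by (rule bounded_linear_intro[where K = "cmod c"])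
        (simp_all add: scaleC_add_right scaleR_scaleC scaleC_scaleC norm_scaleC mult.commute)
    then have "bounded_linear (\<lambda>p::'a \<times> 'a. fst p + c *\<^sub>C snd p)"
      by (intro bounded_linear_add bounded_linear_fst bounded_linear_compose[OF _ bounded_linear_snd])
    then show "continuous_on (closure (S \<times> S)) (\<lambda>(x, y). x + c *\<^sub>C y)"
      by (simp add: case_prod_unfold linear_continuous_on)
    show "(\<lambda>(x, y). x + c *\<^sub>C y) ` (S \<times> S) \<subseteq> closure S"
      using S by (auto intro!: closure_subset[THEN subsetD] csubspace_add csubspace_scaleC)
  qed simp
  then have lin: "x + c *\<^sub>C y \<in> closure S" if "x \<in> closure S" "y \<in> closure S" for x y c
    using that by (auto simp: closure_Times)
  have "0 \<in> closure S"
    using csubspace_0[OF S] closure_subset by blast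
  with lin[of _ _ 1] lin[of 0] show ?thesis
    unfolding csubspace_def by (simp add: scaleC_one)
qed

lemma csubspace_range:
  assumes f: "bounded_clinear f"
  shows "csubspace (range f)"
  unfolding csubspace_def
proof (intro conjI ballI allI)
  show "0 \<in> range f"
    using bounded_clinear_zero[OF f] by (metis rangeI)
  show "x + y \<in> range f" if "x \<in> range f" "y \<in> range f" for x y
    using that by (auto simp flip: bounded_clinear_add[OF f])
  show "c *\<^sub>C x \<in> range f" if "x \<in> range f" for x c
    using that by (auto simp flip: bounded_clinear_scaleC[OF f])
qed

subsection \<open>The projection theorem\<close>

lemma orthogonal_of_closest:
  fixes S :: "'a::complex_inner set"
  assumes S: "csubspace S" and v: "v \<in> S" and s: "s \<in> S"
    and closest: "\<And>s. s \<in> S \<Longrightarrow> norm (x - v) \<le> norm (x - s)"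
  shows "cinner (x - v) s = 0"
proof (cases "s = 0")
  case False
  define w where "w = x - v"
  define z where "z = cinner s w"
  define n2 where "n2 = (norm s)\<^sup>2"
  \<comment> \<open>\<open>t s\<close> is the best approximation of \<open>w\<close> in the direction \<open>s\<close>; it improves on \<open>v\<close> unless \<open>z = 0\<close>.\<close>
  define t where "t = z / complex_of_real n2"
  have n2: "n2 > 0"
    using False by (simp add: n2_def)
  have "v + t *\<^sub>C s \<in> S"
    using S v s by (intro csubspace_add csubspace_scaleC)
  then have "(norm w)\<^sup>2 \<le> (norm (w - t *\<^sub>C s))\<^sup>2"
    using closest[of "v + t *\<^sub>C s"] unfolding w_def by (simp add: algebra_simps)
  also have "\<dots> = (norm w)\<^sup>2 + (norm (t *\<^sub>C s))\<^sup>2 - 2 * Re (cinner w (t *\<^sub>C s))"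
    by (rule power2_norm_diff)
  also have "(norm (t *\<^sub>C s))\<^sup>2 = (cmod z)\<^sup>2 / n2"
    using n2 by (simp add: t_def norm_scaleC norm_divide power_divide power_mult_distrib flip: n2_def)
      (simp add: power2_eq_square)
  also have "cinner w (t *\<^sub>C s) = complex_of_real ((cmod z)\<^sup>2 / n2)"
    by (simp add: t_def z_def cinner_scaleC_right cinner_commute[of w s] mult.commute[of "cinner s w"]
        flip: complex_norm_square)
  finally have "(cmod z)\<^sup>2 / n2 \<le> 0"
    by simp
  with n2 have "z = 0"
    by (simp add: divide_le_0_iff)
  then show ?thesis
    by (subst cinner_commute) (simp add: z_def w_def)
qed simp

lemma Cauchy_minimizing_sequence:
  fixes S :: "'a::complex_inner set"
  assumes S: "csubspace S" and sq: "\<And>n. sq n \<in> S"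
    and lower: "\<And>s. s \<in> S \<Longrightarrow> d \<le> (norm (x - s))\<^sup>2"
    and close: "\<And>n. (norm (x - sq n))\<^sup>2 \<le> d + 1 / Suc n"
  shows "Cauchy sq"
proof (rule CauchyI)
  have dist_sq: "(norm (sq m - sq n))\<^sup>2 \<le> 2 / Suc m + 2 / Suc n" for m n
  proof -
    have "(1 / 2) *\<^sub>R (sq m + sq n) \<in> S"
      using S sq by (intro csubspace_scaleR csubspace_add)
    then have "4 * d \<le> 4 * (norm (x - (1 / 2) *\<^sub>R (sq m + sq n)))\<^sup>2"
      using lower by simp
    also have "\<dots> = (norm ((x - sq m) + (x - sq n)))\<^sup>2"
    proof -
      have "(x - sq m) + (x - sq n) = 2 *\<^sub>R (x - (1 / 2) *\<^sub>R (sq m + sq n))"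
        by (simp add: algebra_simps scaleR_2)
      then show ?thesis
        by (simp add: power_mult_distrib)
    qed
    finally show ?thesis
      using parallelogram_law[of "x - sq m" "x - sq n"] close[of m] close[of n]
      by (simp add: norm_minus_commute)
  qed
  fix e :: real
  assume e: "e > 0"
  obtain N :: nat where N: "4 / e\<^sup>2 < N"
    using reals_Archimedean2 by blast
  have "norm (sq m - sq n) < e" if "N \<le> m" "N \<le> n" for m n
  proof -
    have "2 / Suc m \<le> 2 / Suc N" "2 / Suc n \<le> 2 / Suc N"
      using that by (simp_all add: frac_le)
    then have "2 / Suc m + 2 / Suc n \<le> 4 / Suc N"
      by simp
    also have "\<dots> < e\<^sup>2"
      using N e by (simp add: field_simps) (smt (verit) zero_less_power)
    finally have "(norm (sq m - sq n))\<^sup>2 < e\<^sup>2"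
      using dist_sq[of m n] by linarith
    then show ?thesis
      using e by (simp add: power_less_imp_less_base)
  qed
  then show "\<exists>N. \<forall>m\<ge>N. \<forall>n\<ge>N. norm (sq m - sq n) < e"
    by blast
qed

lemma closest_point_exists:
  fixes S :: "'a::chilbert_space set"
  assumes S: "csubspace S" and closed: "closed S"
  obtains v where "v \<in> S" "\<And>s. s \<in> S \<Longrightarrow> norm (x - v) \<le> norm (x - s)"
proof -
  define D where "D = (\<lambda>s. (norm (x - s))\<^sup>2) ` S"
  have "D \<noteq> {}"
    using csubspace_0[OF S] by (auto simp: D_def)
  have lower: "Inf D \<le> (norm (x - s))\<^sup>2" if "s \<in> S" for s
  proof (rule cInf_lower)
    show "(norm (x - s))\<^sup>2 \<in> D"
      using that by (simp add: D_def)
    show "bdd_below D"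
      by (rule bdd_belowI[of _ 0]) (auto simp: D_def)
  qed
  have "\<exists>s\<in>S. (norm (x - s))\<^sup>2 < Inf D + 1 / Suc n" for n
  proof -
    have "Inf D < Inf D + 1 / Suc n"
      by simp
    from cInf_lessD[OF \<open>D \<noteq> {}\<close> this] show ?thesis
      unfolding D_def by blast
  qed
  then obtain sq where sq: "\<And>n. sq n \<in> S" "\<And>n. (norm (x - sq n))\<^sup>2 < Inf D + 1 / Suc n"
    by metis
  have "Cauchy sq"
    by (rule Cauchy_minimizing_sequence[OF S sq(1)], fact lower, rule less_imp_le[OF sq(2)])
  then obtain v where lim: "sq \<longlonglongrightarrow> v"
    using Cauchy_convergent_iff convergent_def by blast
  have "v \<in> S"
    using closed_sequentially[OF closed sq(1) lim] .
  moreover have "norm (x - v) \<le> norm (x - s)" if "s \<in> S" for s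
  proof -
    have left: "(\<lambda>n. (norm (x - sq n))\<^sup>2) \<longlonglongrightarrow> (norm (x - v))\<^sup>2"
      by (intro tendsto_intros lim)
    have right: "(\<lambda>n. (norm (x - s))\<^sup>2 + 1 / Suc n) \<longlonglongrightarrow> (norm (x - s))\<^sup>2 + 0"
      by (intro tendsto_intros LIMSEQ_inverse_real_of_nat[unfolded inverse_eq_divide])
    have "(norm (x - sq n))\<^sup>2 \<le> (norm (x - s))\<^sup>2 + 1 / Suc n" for n
      using sq(2)[of n] lower[OF that] by linarith
    then have "(norm (x - v))\<^sup>2 \<le> (norm (x - s))\<^sup>2 + 0"
      by (intro LIMSEQ_le[OF left right]) simp
    then show ?thesis
      using power2_le_imp_le[of "norm (x - v)" "norm (x - s)"] by simp
  qed
  ultimately show thesis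
    by (rule that)
qed

lemma orthogonal_projection_exists:
  fixes S :: "'a::chilbert_space set"
  assumes "csubspace S" and "closed S"
  shows "\<exists>v\<in>S. \<forall>s\<in>S. cinner (x - v) s = 0"
proof -
  obtain v where v: "v \<in> S" "\<And>s. s \<in> S \<Longrightarrow> norm (x - v) \<le> norm (x - s)"
    using closest_point_exists[OF assms] by blast
  then show ?thesis
    using orthogonal_of_closest[OF assms(1) v(1) _ v(2)] by blast
qed

lemma orthogonal_projection_unique:
  fixes S :: "'a::complex_inner set"
  assumes S: "csubspace S" and "v \<in> S" "w \<in> S"
    and "\<forall>s\<in>S. cinner (x - v) s = 0" "\<forall>s\<in>S. cinner (x - w) s = 0"
  shows "v = w"
proof -
  have "v - w \<in> S"
    using assms by (simp add: csubspace_diff)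
  then have "cinner (v - w) (v - w) = 0"
    using assms(4,5) cinner_diff_left[of "x - w" "x - v" "v - w"] by simp
  then show ?thesis
    by (simp add: cinner_self_eq_zero)
qed

definition proj_onto :: "'a::chilbert_space set \<Rightarrow> 'a \<Rightarrow> 'a" where
  "proj_onto S x = (SOME v. v \<in> S \<and> (\<forall>s\<in>S. cinner (x - v) s = 0))"

context
  fixes S :: "'a::chilbert_space set"
  assumes S: "csubspace S" "closed S"
begin

lemma proj_onto:
  shows proj_onto_in: "proj_onto S x \<in> S"
    and proj_onto_orthogonal: "\<forall>s\<in>S. cinner (x - proj_onto S x) s = 0"
  using someI_ex[OF orthogonal_projection_exists[OF S, of x, unfolded Bex_def]]
  unfolding proj_onto_def by auto

lemma proj_onto_eqI: "v \<in> S \<Longrightarrow> \<forall>s\<in>S. cinner (x - v) s = 0 \<Longrightarrow> proj_onto S x = v"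
  using orthogonal_projection_unique[OF S(1) proj_onto_in _ proj_onto_orthogonal] by blast

lemma proj_onto_id: "s \<in> S \<Longrightarrow> proj_onto S s = s"
  by (intro proj_onto_eqI) auto

lemma proj_onto_orthogonal_residual: "cinner (proj_onto S x) (y - proj_onto S y) = 0"
proof -
  have "cinner (y - proj_onto S y) (proj_onto S x) = 0"
    using proj_onto_orthogonal proj_onto_in by blast
  then show ?thesis
    by (subst cinner_commute) simp
qed

lemma bounded_clinear_proj_onto: "bounded_clinear (proj_onto S)"
proof -
  let ?P = "proj_onto S"
  have "?P (x + y) = ?P x + ?P y" for x y
  proof (rule proj_onto_eqI)
    show "?P x + ?P y \<in> S"
      by (rule csubspace_add[OF S(1) proj_onto_in proj_onto_in])
    have "x + y - (?P x + ?P y) = (x - ?P x) + (y - ?P y)"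
      by simp
    then show "\<forall>s\<in>S. cinner (x + y - (?P x + ?P y)) s = 0"
      using proj_onto_orthogonal[of x] proj_onto_orthogonal[of y]
      by (simp only: cinner_add_left) simp
  qed
  moreover have "?P (c *\<^sub>C x) = c *\<^sub>C ?P x" for c x
    using proj_onto_in proj_onto_orthogonal
    by (intro proj_onto_eqI)
      (auto intro: csubspace_scaleC[OF S(1)] simp: cinner_scaleC_left simp flip: scaleC_diff_right)
  moreover have "norm (?P x) \<le> norm x * 1" for x
  proof -
    have "(norm x)\<^sup>2 = (norm (?P x))\<^sup>2 + (norm (x - ?P x))\<^sup>2"
      using power2_norm_add[of "?P x" "x - ?P x"] proj_onto_orthogonal_residual[of x x] by simp
    then have "(norm (?P x))\<^sup>2 \<le> (norm x)\<^sup>2"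
      by simp
    from power2_le_imp_le[OF this] show ?thesis
      by simp
  qed
  ultimately show ?thesis
    unfolding bounded_clinear_def by blast
qed

lemma proj_onto_cinner: "cinner (proj_onto S x) y = cinner x (proj_onto S y)"
proof -
  have "cinner (proj_onto S x) y = cinner (proj_onto S x) (proj_onto S y)"
    using proj_onto_orthogonal_residual[of x y] by (simp add: cinner_diff_right)
  also have "\<dots> = cinner x (proj_onto S y)"
    using proj_onto_orthogonal[of x] proj_onto_in[of y] by (simp add: cinner_diff_left)
  finally show ?thesis .
qed

lemma proj_onto_is_orth_proj: "is_orth_proj (proj_onto S)"
  unfolding is_orth_proj_def selfadj_ops_def
  by (simp add: bounded_clinear_proj_onto proj_onto_cinner proj_onto_id proj_onto_in fun_eq_iff)

lemma range_proj_onto: "range (proj_onto S) = S"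
  using proj_onto_in proj_onto_id by (metis image_subsetI subsetI subset_antisym rangeI)

end

subsection \<open>Orthogonal projections\<close>

lemma selfadj_bounded_clinear: "X \<in> selfadj_ops \<Longrightarrow> bounded_clinear X"
  unfolding selfadj_ops_def by blast

lemma selfadj_cinner: "X \<in> selfadj_ops \<Longrightarrow> cinner (X x) y = cinner x (X y)"
  unfolding selfadj_ops_def by blast

lemma orth_proj_selfadj: "is_orth_proj P \<Longrightarrow> P \<in> selfadj_ops"
  unfolding is_orth_proj_def by blast

lemma orth_proj_bounded_clinear: "is_orth_proj P \<Longrightarrow> bounded_clinear P"
  by (simp add: orth_proj_selfadj selfadj_bounded_clinear)

lemma orth_proj_cinner: "is_orth_proj P \<Longrightarrow> cinner (P x) y = cinner x (P y)"
  by (simp add: orth_proj_selfadj selfadj_cinner)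

lemma orth_proj_idem: "is_orth_proj P \<Longrightarrow> P (P x) = P x"
  unfolding is_orth_proj_def by (metis comp_apply)

lemma orth_proj_fixes_range: "is_orth_proj P \<Longrightarrow> y \<in> range P \<Longrightarrow> P y = y"
  by (auto simp: orth_proj_idem)

lemma orth_proj_residual_orthogonal:
  assumes P: "is_orth_proj P"
  shows "cinner (x - P x) (P z) = 0"
proof -
  have "P (x - P x) = 0"
    by (simp add: bounded_clinear_diff[OF orth_proj_bounded_clinear[OF P]] orth_proj_idem[OF P])
  then show ?thesis
    by (simp flip: orth_proj_cinner[OF P])
qed

lemma orth_proj_eqI:
  assumes P: "is_orth_proj P" and "v \<in> range P" and "\<forall>s\<in>range P. cinner (x - v) s = 0"
  shows "P x = v"
  using orthogonal_projection_unique[OF csubspace_range[OF orth_proj_bounded_clinear[OF P]]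
      _ assms(2) _ assms(3)] orth_proj_residual_orthogonal[OF P]
  by blast

lemma orth_proj_unique:
  assumes P: "is_orth_proj P" and Q: "is_orth_proj Q" and "range P = range Q"
  shows "P = Q"
proof
  fix x
  show "P x = Q x"
    using orth_proj_eqI[OF P] orth_proj_residual_orthogonal[OF Q] assms(3) by auto
qed

lemma range_proj:
  fixes C :: "'a::chilbert_space \<Rightarrow> 'a"
  assumes "bounded_clinear C"
  shows is_orth_proj_range_proj: "is_orth_proj (range_proj C)"
    and range_range_proj: "range (range_proj C) = closure (range C)"
proof -
  let ?S = "closure (range C)"
  have S: "csubspace ?S" "closed ?S"
    by (simp_all add: csubspace_closure csubspace_range assms)
  have "\<exists>!P. is_orth_proj P \<and> range P = ?S"
    using proj_onto_is_orth_proj[OF S] range_proj_onto[OF S] orth_proj_unique by metis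
  then have "is_orth_proj (range_proj C) \<and> range (range_proj C) = ?S"
    unfolding range_proj_def by (rule theI')
  then show "is_orth_proj (range_proj C)" "range (range_proj C) = ?S"
    by auto
qed

lemma proj_leI:
  assumes P: "is_orth_proj P" and Q: "is_orth_proj Q" and "range P \<subseteq> range Q"
  shows "proj_le P Q"
  unfolding proj_le_def
proof
  fix x
  show "(P \<circ> Q) x = P x"
  proof (rule cinner_extensionality)
    fix y
    have "P y \<in> range Q"
      using assms(3) by blast
    then have "Q (P y) = P y"
      by (rule orth_proj_fixes_range[OF Q])
    then show "cinner ((P \<circ> Q) x) y = cinner (P x) y"
      by (simp add: orth_proj_cinner[OF P] orth_proj_cinner[OF Q])
  qed
qed

lemma proj_le_absorb:
  assumes P: "is_orth_proj P" and Q: "is_orth_proj Q" and "proj_le P Q"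
  shows "Q (P x) = P x"
proof (rule cinner_extensionality)
  fix y
  have "P (Q y) = P y"
    using assms(3) unfolding proj_le_def by (metis comp_apply)
  then show "cinner (Q (P x)) y = cinner (P x) y"
    by (simp add: orth_proj_cinner[OF P] orth_proj_cinner[OF Q])
qed

subsection \<open>The logical order\<close>

lemma selfadj_apply_range_proj:
  assumes C: "C \<in> selfadj_ops"
  shows "C (range_proj C y) = C y"
proof -
  let ?P = "range_proj C"
  have bC: "bounded_clinear C"
    using C by (rule selfadj_bounded_clinear)
  have P: "is_orth_proj ?P"
    using bC by (rule is_orth_proj_range_proj)
  have "cinner (C (y - ?P y)) z = 0" for z
  proof -
    have "C z \<in> range ?P"
      unfolding range_range_proj[OF bC] by (rule closure_subset[THEN subsetD]) simp
    then have "?P (C z) = C z"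
      by (rule orth_proj_fixes_range[OF P])
    then have "cinner (y - ?P y) (C z) = 0"
      using orth_proj_residual_orthogonal[OF P, of y "C z"] by simp
    then show ?thesis
      by (simp add: selfadj_cinner[OF C])
  qed
  then have "C (y - ?P y) = 0"
    by (rule cinner_eq_zero_imp_zero)
  then show ?thesis
    by (simp add: bounded_clinear_diff[OF bC])
qed

lemma logic_le_comp_range_proj:
  assumes A: "A \<in> selfadj_ops" and C: "C \<in> selfadj_ops" and "logic_le C A"
  shows "A \<circ> range_proj C = C"
proof -
  obtain D where D: "D \<in> selfadj_ops" and A_eq: "A = (\<lambda>x. C x + D x)" and "C \<circ> D = zero_op"
    using assms(3) unfolding logic_le_def by blast
  have "C (D y) = 0" for y
    using fun_cong[OF \<open>C \<circ> D = zero_op\<close>, of y] by (simp add: zero_op_def)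
  then have "D (C x) = 0" for x
    by (intro cinner_eq_zero_imp_zero) (simp add: selfadj_cinner[OF D] selfadj_cinner[OF C])
  moreover have "closed {x. D x = 0}"
    by (intro closed_Collect_eq continuous_on_const
        bounded_clinear_continuous_on[OF selfadj_bounded_clinear[OF D]])
  ultimately have "closure (range C) \<subseteq> {x. D x = 0}"
    by (intro closure_minimal) auto
  then have "D (range_proj C y) = 0" for y
    using range_range_proj[OF selfadj_bounded_clinear[OF C]] by blast
  then show ?thesis
    by (simp add: A_eq fun_eq_iff selfadj_apply_range_proj[OF C])
qed

lemma orth_proj_commute_of_comp_eq:
  assumes E: "E \<in> selfadj_ops" and X: "X \<in> selfadj_ops" and P: "is_orth_proj P"
    and E_eq: "E = X \<circ> P"
  shows "P (X x) = X (P x)"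
proof (rule cinner_extensionality)
  fix y
  have "cinner (P (X x)) y = cinner x (E y)"
    using E_eq by (simp add: orth_proj_cinner[OF P] selfadj_cinner[OF X])
  also have "\<dots> = cinner (E x) y"
    by (simp add: selfadj_cinner[OF E])
  also have "\<dots> = cinner (X (P x)) y"
    using E_eq by simp
  finally show "cinner (P (X x)) y = cinner (X (P x)) y" .
qed

lemma orth_proj_commute_of_invariant:
  assumes P: "is_orth_proj P" and X: "X \<in> selfadj_ops"
    and invariant: "\<And>v. v \<in> range P \<Longrightarrow> X v \<in> range P"
  shows "P (X x) = X (P x)"
proof (rule orth_proj_eqI[OF P])
  show "X (P x) \<in> range P"
    by (simp add: invariant)
  show "\<forall>s\<in>range P. cinner (X x - X (P x)) s = 0"
  proof
    fix s
    assume "s \<in> range P"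
    then have "P (X s) = X s"
      by (intro orth_proj_fixes_range[OF P] invariant)
    then have "cinner (x - P x) (X s) = 0"
      using orth_proj_residual_orthogonal[OF P, of x "X s"] by simp
    then show "cinner (X x - X (P x)) s = 0"
      by (simp add: selfadj_cinner[OF X] flip: bounded_clinear_diff[OF selfadj_bounded_clinear[OF X]])
  qed
qed

lemma
  assumes X: "X \<in> selfadj_ops" and P: "is_orth_proj P" and commute: "\<And>x. P (X x) = X (P x)"
  shows selfadj_comp_commuting_orth_proj: "X \<circ> P \<in> selfadj_ops"
    and logic_le_comp_commuting_orth_proj: "logic_le (X \<circ> P) X"
proof -
  have bX: "bounded_clinear X" and bP: "bounded_clinear P"
    by (simp_all add: selfadj_bounded_clinear[OF X] orth_proj_bounded_clinear[OF P])
  show XP: "X \<circ> P \<in> selfadj_ops"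
    unfolding selfadj_ops_def
    using bounded_clinear_compose[OF bX bP] commute
    by (simp add: selfadj_cinner[OF X] orth_proj_cinner[OF P])
  define D where "D x = X x - X (P x)" for x
  have "D \<in> selfadj_ops"
    unfolding selfadj_ops_def D_def
    using bounded_clinear_sub[OF bX bounded_clinear_compose[OF bX bP]] selfadj_cinner[OF X]
      selfadj_cinner[OF XP]
    by (simp add: cinner_diff_left cinner_diff_right)
  moreover have "P (D x) = 0" for x
    by (simp add: D_def bounded_clinear_diff[OF bP] commute orth_proj_idem[OF P])
  then have "(X \<circ> P) \<circ> D = zero_op"
    by (simp add: fun_eq_iff zero_op_def bounded_clinear_zero[OF bX])
  moreover have "X = (\<lambda>x. (X \<circ> P) x + D x)"
    by (simp add: D_def fun_eq_iff)
  ultimately show "logic_le (X \<circ> P) X"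
    unfolding logic_le_def by blast
qed

subsection \<open>Construction of the meet\<close>

inductive_set words :: "('a \<Rightarrow> 'a) \<Rightarrow> ('a \<Rightarrow> 'a) \<Rightarrow> ('a \<Rightarrow> 'a) set" for A B where
  id: "id \<in> words A B"
| comp_left: "w \<in> words A B \<Longrightarrow> w \<circ> A \<in> words A B"
| comp_right: "w \<in> words A B \<Longrightarrow> w \<circ> B \<in> words A B"

lemma bounded_clinear_words:
  assumes "bounded_clinear A" "bounded_clinear B" "w \<in> words A B"
  shows "bounded_clinear w"
  using assms(3) by induction (use assms(1,2) bounded_clinear_id bounded_clinear_compose in blast)+

lemma words_preserve_invariant:
  assumes "w \<in> words A B" and "\<And>x. x \<in> V \<Longrightarrow> A x \<in> V" and "\<And>x. x \<in> V \<Longrightarrow> B x \<in> V"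
  shows "x \<in> V \<Longrightarrow> w x \<in> V"
  using assms(1) by (induction arbitrary: x) (simp_all add: assms(2,3))

definition agreement_space :: "('a::chilbert_space \<Rightarrow> 'a) \<Rightarrow> ('a \<Rightarrow> 'a) \<Rightarrow> 'a set" where
  "agreement_space A B = {x. \<forall>w\<in>words A B. A (w x) = B (w x)}"

definition logic_meet :: "('a::chilbert_space \<Rightarrow> 'a) \<Rightarrow> ('a \<Rightarrow> 'a) \<Rightarrow> 'a \<Rightarrow> 'a" where
  "logic_meet A B = A \<circ> proj_onto (agreement_space A B)"

lemma agreement_space_invariant:
  assumes "x \<in> agreement_space A B"
  shows "A x \<in> agreement_space A B" and "B x \<in> agreement_space A B"
  using assms words.comp_left words.comp_right unfolding agreement_space_def by fastforce+

context
  fixes A B :: "'a::chilbert_space \<Rightarrow> 'a"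
  assumes A: "A \<in> selfadj_ops" and B: "B \<in> selfadj_ops"
begin

private lemma bounded_clinear_A_B: "bounded_clinear A" "bounded_clinear B"
  using A B by (simp_all add: selfadj_bounded_clinear)

lemma csubspace_agreement_space: "csubspace (agreement_space A B)"
  using bounded_clinear_words[OF bounded_clinear_A_B] bounded_clinear_A_B
  unfolding csubspace_def agreement_space_def
  by (simp add: bounded_clinear_zero bounded_clinear_add bounded_clinear_scaleC)

lemma closed_agreement_space: "closed (agreement_space A B)"
proof -
  have "closed {x. (A \<circ> w) x = (B \<circ> w) x}" if "w \<in> words A B" for w
    using bounded_clinear_words[OF bounded_clinear_A_B that] bounded_clinear_A_B
    by (intro closed_Collect_eq bounded_clinear_continuous_on bounded_clinear_compose)
  then have "closed (\<Inter>w\<in>words A B. {x. (A \<circ> w) x = (B \<circ> w) x})"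
    by blast
  moreover have "agreement_space A B = (\<Inter>w\<in>words A B. {x. (A \<circ> w) x = (B \<circ> w) x})"
    by (auto simp: agreement_space_def)
  ultimately show ?thesis
    by simp
qed

private lemma proj_onto_agreement_space:
  "is_orth_proj (proj_onto (agreement_space A B))"
  "range (proj_onto (agreement_space A B)) = agreement_space A B"
  using proj_onto_is_orth_proj range_proj_onto csubspace_agreement_space closed_agreement_space
  by auto

lemma comp_proj_onto_agreement_space:
  "A \<circ> proj_onto (agreement_space A B) = B \<circ> proj_onto (agreement_space A B)"
proof
  fix x
  have "proj_onto (agreement_space A B) x \<in> agreement_space A B"
    using proj_onto_agreement_space(2) by blast
  then show "(A \<circ> proj_onto (agreement_space A B)) x = (B \<circ> proj_onto (agreement_space A B)) x"
    using words.id unfolding agreement_space_def by fastforce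
qed

lemma
  shows selfadj_logic_meet: "logic_meet A B \<in> selfadj_ops"
    and logic_meet_le_left: "logic_le (logic_meet A B) A"
    and logic_meet_le_right: "logic_le (logic_meet A B) B"
proof -
  let ?Q = "proj_onto (agreement_space A B)"
  note Q = proj_onto_agreement_space
  have "X v \<in> range ?Q" if "X \<in> {A, B}" "v \<in> range ?Q" for X v
    using that agreement_space_invariant unfolding Q(2) by auto
  then have "?Q (X x) = X (?Q x)" if "X \<in> {A, B}" for X x
    using that A B by (auto intro!: orth_proj_commute_of_invariant[OF Q(1)])
  then show "logic_meet A B \<in> selfadj_ops" "logic_le (logic_meet A B) A"
    "logic_le (logic_meet A B) B"
    using selfadj_comp_commuting_orth_proj[OF A Q(1)]
      logic_le_comp_commuting_orth_proj[OF A Q(1)] logic_le_comp_commuting_orth_proj[OF B Q(1)]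
    by (simp_all add: logic_meet_def comp_proj_onto_agreement_space)
qed

lemma range_range_proj_subset_agreement_space:
  assumes C: "C \<in> selfadj_ops" "logic_le C A" "logic_le C B"
  shows "range (range_proj C) \<subseteq> agreement_space A B"
proof
  let ?P = "range_proj C"
  have P: "is_orth_proj ?P"
    using C(1) by (simp add: is_orth_proj_range_proj selfadj_bounded_clinear)
  have AP: "A \<circ> ?P = C" and BP: "B \<circ> ?P = C"
    using logic_le_comp_range_proj A B C by auto
  have invariant: "X v \<in> range ?P" if v: "v \<in> range ?P" and X: "X \<in> {A, B}" for X v
  proof -
    obtain u where "v = ?P u"
      using v by blast
    moreover have "?P (X (?P u)) = X (?P (?P u))"
      using X orth_proj_commute_of_comp_eq[OF C(1) _ P] A B AP BP by auto
    ultimately show ?thesis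
      by (metis orth_proj_idem[OF P] rangeI)
  qed
  fix v
  assume v: "v \<in> range ?P"
  have "A (w v) = B (w v)" if "w \<in> words A B" for w
  proof -
    have "w v \<in> range ?P"
      by (rule words_preserve_invariant[OF that]) (simp_all add: invariant v)
    then obtain u where "w v = ?P u"
      by blast
    then show ?thesis
      using AP BP by (metis comp_apply)
  qed
  then show "v \<in> agreement_space A B"
    by (simp add: agreement_space_def)
qed

lemma range_proj_le_range_proj_logic_meet:
  assumes C: "C \<in> selfadj_ops" "logic_le C A" "logic_le C B"
  shows "proj_le (range_proj C) (range_proj (logic_meet A B))"
proof (rule proj_leI)
  let ?Q = "proj_onto (agreement_space A B)"
  have "range C \<subseteq> range (logic_meet A B)"
  proof
    fix y
    assume "y \<in> range C"
    then obtain x where "y = C x"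
      by blast
    have "range_proj C x \<in> range ?Q"
      using range_range_proj_subset_agreement_space[OF C] proj_onto_agreement_space(2) by blast
    then have "?Q (range_proj C x) = range_proj C x"
      by (rule orth_proj_fixes_range[OF proj_onto_agreement_space(1)])
    then have "logic_meet A B (range_proj C x) = A (range_proj C x)"
      by (simp add: logic_meet_def)
    also have "\<dots> = y"
      using logic_le_comp_range_proj[OF A C(1,2)] \<open>y = C x\<close> by (metis comp_apply)
    finally show "y \<in> range (logic_meet A B)"
      by (metis rangeI)
  qed
  then show "range (range_proj C) \<subseteq> range (range_proj (logic_meet A B))"
    using range_range_proj[OF selfadj_bounded_clinear[OF C(1)]]
      range_range_proj[OF selfadj_bounded_clinear[OF selfadj_logic_meet]]
    by (simp add: closure_mono)
  show "is_orth_proj (range_proj C)" "is_orth_proj (range_proj (logic_meet A B))"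
    using C(1) selfadj_logic_meet by (simp_all add: is_orth_proj_range_proj selfadj_bounded_clinear)
qed

lemma comp_range_proj_logic_meet: "B \<circ> range_proj (logic_meet A B) = logic_meet A B"
  using logic_le_comp_range_proj[OF B selfadj_logic_meet logic_meet_le_right] .

lemma is_logic_meet_logic_meet: "is_logic_meet A B (logic_meet A B)"
  unfolding is_logic_meet_def
proof (intro conjI ballI impI selfadj_logic_meet logic_meet_le_left logic_meet_le_right; elim conjE)
  fix E
  assume E: "E \<in> selfadj_ops" "logic_le E A" "logic_le E B"
  let ?P = "range_proj E" and ?M = "range_proj (logic_meet A B)"
  have P: "is_orth_proj ?P" and M: "is_orth_proj ?M"
    using E(1) selfadj_logic_meet by (simp_all add: is_orth_proj_range_proj selfadj_bounded_clinear)
  have "E = B \<circ> ?P"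
    using logic_le_comp_range_proj[OF B E(1,3)] by simp
  also have "\<dots> = B \<circ> ?M \<circ> ?P"
    using proj_le_absorb[OF P M range_proj_le_range_proj_logic_meet[OF E]] by (simp add: fun_eq_iff)
  also have "\<dots> = logic_meet A B \<circ> ?P"
    by (simp add: comp_range_proj_logic_meet)
  finally have E_eq: "E = logic_meet A B \<circ> ?P" .
  then have "?P (logic_meet A B x) = logic_meet A B (?P x)" for x
    by (rule orth_proj_commute_of_comp_eq[OF E(1) selfadj_logic_meet P])
  then show "logic_le E (logic_meet A B)"
    using logic_le_comp_commuting_orth_proj[OF selfadj_logic_meet P] E_eq by simp
qed

end

theorem corollary4:
  fixes A B :: "'a::chilbert_space \<Rightarrow> 'a"
  assumes "A \<in> selfadj_ops" and "B \<in> selfadj_ops"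
  shows "\<exists>M. M \<in> {range_proj C | C. C \<in> selfadj_ops \<and> logic_le C A \<and> logic_le C B}
           \<and> (\<forall>Q \<in> {range_proj C | C. C \<in> selfadj_ops \<and> logic_le C A \<and> logic_le C B}. proj_le Q M)
           \<and> (\<exists>L. is_logic_meet A B L)
           \<and> is_logic_meet A B (B \<circ> M)"
proof (rule exI[of _ "range_proj (logic_meet A B)"], intro conjI)
  let ?M = "range_proj (logic_meet A B)"
  show "?M \<in> {range_proj C | C. C \<in> selfadj_ops \<and> logic_le C A \<and> logic_le C B}"
    using selfadj_logic_meet logic_meet_le_left logic_meet_le_right assms by blast
  show "\<forall>Q \<in> {range_proj C | C. C \<in> selfadj_ops \<and> logic_le C A \<and> logic_le C B}. proj_le Q ?M"
    using range_proj_le_range_proj_logic_meet assms by blast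
  show "\<exists>L. is_logic_meet A B L" "is_logic_meet A B (B \<circ> ?M)"
    using is_logic_meet_logic_meet[OF assms] comp_range_proj_logic_meet[OF assms] by auto
qed

end
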